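(* Let $k,l\geq 0$. In the $\mathbb{Q}$-vector space with basis the surjective maps $\sigma:[k+l]\twoheadrightarrow[p]$, $p\leq k+l$, the following identity holds: \[\sum_{\substack{\sigma'\in \mathrm{inc}(k),\ \sigma''\in \mathrm{inc}(l)\\ \tau \in \mathrm{qsh}(\max(\sigma'),\max(\sigma''))}}\frac{\tau\circ(\sigma' \otimes \sigma'')}{\sigma'!\,\sigma''!} =\sum_{\substack{\sigma\in \mathrm{sh}(k,l)\\ \tau\in \mathrm{inc}(k+l)}} \frac{\tau\circ \sigma}{\tau!}. \]
   Context: For $n\in\mathbb{N}$, $[n]=\{1,\dots,n\}$, $[0]=\emptyset$. For $k,l\geq 0$, a $(k,l)$-quasi-shuffle is a surjective map $\sigma:[k+l]\twoheadrightarrow[n]$ (for some $n$) with $\sigma(1)<\dots<\sigma(k)$ and $\sigma(k+1)<\dots<\sigma(k+l)$; $\mathrm{qsh}(k,l)$ is the set of these. $\mathrm{sh}(k,l)\subseteq\mathrm{qsh}(k,l)$ is the set of injective ones (shuffles, i.e. bijections $[k+l]\to[k+l]$). For $k\geq 0$, $\mathrm{inc}(k)$ is the set of surjective maps $\sigma:[k]\twoheadrightarrow[m]$ (some $m$) with $\sigma(1)\leq\dots\leq\sigma(k)$ (for $k=0$ it consists of the empty map, with $\max=0$). For a map $\sigma:[k]\to[m]$, $\sigma!=\prod_{i=1}^m|\sigma^{-1}(i)|!$, and $\max(\sigma)$ is its largest value ($0$ if $k=0$). For $\sigma':[k]\to[a]$ and $\sigma'':[l]\to[b]$, $\sigma'\otimes\sigma'':[k+l]\to[a+b]$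 is the map $i\mapsto\sigma'(i)$ for $i\leq k$ and $i\mapsto a+\sigma''(i-k)$ for $i>k$. *)

theory Defs
  imports Complex_Main "HOL-Library.Poly_Mapping"
begin

text \<open>A map \<sigma> : [n] \<rightarrow> [m] is encoded as the list [\<sigma>(1), ..., \<sigma>(n)] of its values
  (values are 1-based). It is surjective onto [m] iff its set of values is {1..m}.\<close>

definition surj_onto_interval :: "nat list \<Rightarrow> bool" where
  "surj_onto_interval xs \<longleftrightarrow> (\<exists>m. set xs = {1..m})"

definition mx :: "nat list \<Rightarrow> nat" where
  "mx xs = Max (insert 0 (set xs))"

definition qsh :: "nat \<Rightarrow> nat \<Rightarrow> nat list set" where
  "qsh k l = {xs. length xs = k + l \<and> surj_onto_interval xs
      \<and> sorted_wrt (<) (take k xs) \<and> sorted_wrt (<) (drop k xs)}"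

definition sh :: "nat \<Rightarrow> nat \<Rightarrow> nat list set" where
  "sh k l = {xs \<in> qsh k l. distinct xs}"

definition inc :: "nat \<Rightarrow> nat list set" where
  "inc k = {xs. length xs = k \<and> surj_onto_interval xs \<and> sorted xs}"

text \<open>\<sigma>! = product over the values i of |\<sigma>^{-1}(i)|! (values outside the image give 0! = 1)\<close>
definition map_fact :: "nat list \<Rightarrow> nat" where
  "map_fact xs = (\<Prod>i\<in>set xs. fact (count_list xs i))"

text \<open>\<sigma>' \<otimes> \<sigma>'' with \<sigma>' : [k] \<rightarrow> [mx \<sigma>']\<close>
definition tensor :: "nat list \<Rightarrow> nat list \<Rightarrow> nat list" where
  "tensor xs ys = xs @ map (\<lambda>y. mx xs + y) ys"

definition comp_map :: "nat list \<Rightarrow> nat list \<Rightarrow> nat list" where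
  "comp_map \<tau> \<sigma> = map (\<lambda>i. \<tau> ! (i - 1)) \<sigma>"

end

theory Submission
  imports Defs "HOL-Library.Multiset"
begin

text \<open>Both sides are linear combinations of the maps \<open>f\<close> onto an interval whose first \<open>k\<close> and
last \<open>l\<close> values are weakly increasing. On the left each such \<open>f\<close> occurs exactly once: each half
of \<open>f\<close> factors uniquely as a strictly increasing relabelling of a weakly increasing surjection,
and the two relabellings glue to a quasi-shuffle; the coefficient is \<open>1/(u! w!)\<close> for the halves
\<open>u\<close> and \<open>w\<close> of \<open>f\<close>. On the right the increasing map \<open>\<tau>\<close> is forced to be the sorted
rearrangement \<open>t\<close> of \<open>f\<close>, and the shuffles \<open>\<sigma>\<close> with \<open>t \<circ> \<sigma> = f\<close> correspond to the ways of
splitting \<open>t\<close> into the subsequences \<open>u\<close> and \<open>w\<close>, of which there are \<open>t!/(u! w!)\<close>.\<close>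

lemma mx_eq: "set xs = {1..m} \<Longrightarrow> mx xs = m"
  unfolding mx_def by (rule Max_eqI) auto

lemma surj_onto_interval_subset: "surj_onto_interval xs \<Longrightarrow> set xs \<subseteq> {1..length xs}"
  unfolding surj_onto_interval_def by (metis atLeastAtMost_iff card_atLeastAtMost card_length
      diff_Suc_1 order_trans subsetI)

lemma finite_surj_onto_interval: "finite {xs. length xs = n \<and> surj_onto_interval xs}"
  by (rule finite_subset[OF _ finite_lists_length_eq[OF finite_atLeastAtMost[of 1 n], of n]])
     (use surj_onto_interval_subset in fastforce)

lemma finite_inc: "finite (inc k)"
  by (rule finite_subset[OF _ finite_surj_onto_interval[of k]]) (auto simp: inc_def)

lemma finite_qsh: "finite (qsh k l)"
  by (rule finite_subset[OF _ finite_surj_onto_interval[of "k + l"]]) (auto simp: qsh_def)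

lemma finite_sh: "finite (sh k l)"
  using finite_qsh[of k l] by (simp add: sh_def)

lemma incD:
  assumes "\<sigma> \<in> inc k"
  shows "length \<sigma> = k" "sorted \<sigma>" "set \<sigma> = {1..mx \<sigma>}"
  using assms mx_eq by (auto simp: inc_def surj_onto_interval_def)

lemma qshD:
  assumes "\<tau> \<in> qsh a b"
  shows "length \<tau> = a + b" "surj_onto_interval \<tau>"
    "sorted_wrt (<) (take a \<tau>)" "sorted_wrt (<) (drop a \<tau>)"
  using assms by (auto simp: qsh_def)

lemma shD:
  assumes "\<sigma> \<in> sh k l"
  shows "length \<sigma> = k + l" "set \<sigma> = {1..k+l}" "distinct \<sigma>"
    "sorted_wrt (<) (take k \<sigma>)" "sorted_wrt (<) (drop k \<sigma>)"
proof -
  from assms obtain m where m: "set \<sigma> = {1..m}" and d: "distinct \<sigma>" and len: "length \<sigma> = k + l"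
    and "sorted_wrt (<) (take k \<sigma>)" "sorted_wrt (<) (drop k \<sigma>)"
    by (auto simp: sh_def qsh_def surj_onto_interval_def)
  moreover have "m = k + l"
    using distinct_card[OF d] len m by simp
  ultimately show "length \<sigma> = k + l" "set \<sigma> = {1..k+l}" "distinct \<sigma>"
    "sorted_wrt (<) (take k \<sigma>)" "sorted_wrt (<) (drop k \<sigma>)" by auto
qed

lemma map_fact_pos: "0 < map_fact xs"
  unfolding map_fact_def by (rule prod_pos) simp

lemma map_fact_snoc: "map_fact (xs @ [z]) = map_fact xs * count_list (xs @ [z]) z"
proof (cases "z \<in> set xs")
  case True
  have "map_fact (xs @ [z]) = fact (count_list xs z + 1) * (\<Prod>i\<in>set xs - {z}. fact (count_list xs i))"
    unfolding map_fact_def using True by (simp add: prod.remove insert_absorb)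
  moreover have "map_fact xs = fact (count_list xs z) * (\<Prod>i\<in>set xs - {z}. fact (count_list xs i))"
    unfolding map_fact_def using True by (simp add: prod.remove)
  ultimately show ?thesis by (simp add: algebra_simps)
next
  case False
  then have "map_fact (xs @ [z]) = fact (count_list (xs @ [z]) z) * map_fact xs"
    unfolding map_fact_def by (auto intro!: prod.cong)
  then show ?thesis using False by (simp add: count_list_0_iff)
qed

lemma map_fact_map_inj_on:
  assumes "inj_on h (set xs)"
  shows "map_fact (map h xs) = map_fact xs"
proof -
  have "map_fact (map h xs) = (\<Prod>i\<in>set xs. fact (count_list (map h xs) (h i)))"
    unfolding map_fact_def using prod.reindex[OF assms] by (simp add: comp_def)
  also have "\<dots> = map_fact xs"
    unfolding map_fact_def by (intro prod.cong refl) (simp add: count_list_inj_map[OF assms])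
  finally show ?thesis .
qed

lemma sorted_le_last: "sorted (u :: 'a :: linorder list) \<Longrightarrow> x \<in> set u \<Longrightarrow> x \<le> last u"
  by (metis in_set_conv_decomp_last last.simps last_appendR last_in_set
      list.discI nle_le sorted_append sorted_simps(2))

lemma sorted_last_eq_iff_mem:
  assumes "sorted u" "\<forall>x\<in>set u. x \<le> z"
  shows "u \<noteq> [] \<and> last u = z \<longleftrightarrow> z \<in> set u"
  using assms sorted_le_last[of u z] by (metis empty_iff last_in_set list.set(1) order.antisym)

section \<open>Splitting a sorted list into two subsequences\<close>

lemma nths_eq_map_nth_filter: "nths t A = map (nth t) (filter (\<lambda>i. i \<in> A) [0..<length t])"
proof (induction t rule: rev_induct)
  case (snoc z t)
  have "map (nth (t @ [z])) (filter (\<lambda>i. i \<in> A) [0..<length t])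
      = map (nth t) (filter (\<lambda>i. i \<in> A) [0..<length t])"
    by (intro map_cong) (auto simp: nth_append)
  then show ?case using snoc by (simp add: nths_append)
qed simp

lemma nths_cong: "(\<And>i. i < length t \<Longrightarrow> i \<in> A \<longleftrightarrow> i \<in> B) \<Longrightarrow> nths t A = nths t B"
  unfolding nths_eq_map_nth_filter by (intro arg_cong[where f="map _"] filter_cong) auto

definition splitting_sets :: "'a list \<Rightarrow> 'a list \<Rightarrow> 'a list \<Rightarrow> nat set set" where
  "splitting_sets t u w = {A. A \<subseteq> {..<length t} \<and> nths t A = u \<and> nths t (- A) = w}"

lemma finite_splitting_sets: "finite (splitting_sets t u w)"
  by (rule finite_subset[of _ "Pow {..<length t}"]) (auto simp: splitting_sets_def)

lemma mem_splitting_sets_snoc: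
  "A \<in> splitting_sets (t @ [z]) u w \<longleftrightarrow>
     (length t \<in> A \<and> u \<noteq> [] \<and> last u = z \<and> A - {length t} \<in> splitting_sets t (butlast u) w)
   \<or> (length t \<notin> A \<and> w \<noteq> [] \<and> last w = z \<and> A \<in> splitting_sets t u (butlast w))"
proof -
  have "nths t (A - {length t}) = nths t A" "nths t (- (A - {length t})) = nths t (- A)"
    by (auto intro: nths_cong)
  then show ?thesis
    unfolding splitting_sets_def by (auto simp: nths_append snoc_eq_iff_butlast less_Suc_eq)
qed

lemma splitting_sets_snoc:
  "splitting_sets (t @ [z]) u w =
     insert (length t) ` (if u \<noteq> [] \<and> last u = z then splitting_sets t (butlast u) w else {})
   \<union> (if w \<noteq> [] \<and> last w = z then splitting_sets t u (butlast w) else {})"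
  (is "?L = ?R1 \<union> ?R2")
proof (intro equalityI subsetI)
  fix A assume "A \<in> ?L"
  then consider "length t \<in> A" "u \<noteq> [] \<and> last u = z" "A - {length t} \<in> splitting_sets t (butlast u) w"
    | "w \<noteq> [] \<and> last w = z" "A \<in> splitting_sets t u (butlast w)"
    unfolding mem_splitting_sets_snoc by blast
  then show "A \<in> ?R1 \<union> ?R2"
    by cases (simp_all add: insert_absorb rev_image_eqI[of "A - {length t}"])
next
  have fresh: "length t \<notin> B" if "B \<in> splitting_sets t u' w'" for B u' w'
    using that by (auto simp: splitting_sets_def)
  fix A assume "A \<in> ?R1 \<union> ?R2"
  then show "A \<in> ?L"
  proof
    assume "A \<in> ?R1"
    then obtain B where "A = insert (length t) B" "u \<noteq> [] \<and> last u = z"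
      "B \<in> splitting_sets t (butlast u) w"
      by (auto split: if_splits)
    with fresh show ?thesis by (simp add: mem_splitting_sets_snoc)
  next
    assume "A \<in> ?R2"
    with fresh show ?thesis by (simp add: mem_splitting_sets_snoc split: if_splits)
  qed
qed

lemma card_splitting_sets_snoc:
  "card (splitting_sets (t @ [z]) u w) =
     (if u \<noteq> [] \<and> last u = z then card (splitting_sets t (butlast u) w) else 0)
   + (if w \<noteq> [] \<and> last w = z then card (splitting_sets t u (butlast w)) else 0)"
proof -
  have fresh: "length t \<notin> B" if "B \<in> splitting_sets t u' w'" for B u' w'
    using that by (auto simp: splitting_sets_def)
  have "inj_on (insert (length t)) (splitting_sets t u' w')" for u' w'
    by (rule inj_onI) (metis Diff_insert_absorb fresh)
  moreover have "insert (length t) ` splitting_sets t u' w' \<inter> splitting_sets t u'' w'' = {}"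
    for u' w' u'' w''
    using fresh by blast
  ultimately show ?thesis
    unfolding splitting_sets_snoc
    by (simp add: card_Un_disjoint finite_splitting_sets card_image)
qed

lemma card_splitting_sets_swap: "card (splitting_sets t u w) = card (splitting_sets t w u)"
proof -
  have "nths t ({..<length t} - A) = nths t (- A)" "nths t (- ({..<length t} - A)) = nths t A" for A
    by (auto intro: nths_cong)
  then have "{..<length t} - A \<in> splitting_sets t w' u'" if "A \<in> splitting_sets t u' w'" for A u' w'
    using that by (auto simp: splitting_sets_def)
  moreover have "{..<length t} - ({..<length t} - A) = A" if "A \<in> splitting_sets t u' w'" for A u' w'
    using that by (auto simp: splitting_sets_def)
  ultimately have "bij_betw (\<lambda>A. {..<length t} - A) (splitting_sets t u w) (splitting_sets t w u)"
    by (intro bij_betw_byWitness[where f'="\<lambda>A. {..<length t} - A"]) auto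
  then show ?thesis by (rule bij_betw_same_card)
qed

lemma card_splitting_sets_mult_map_fact:
  "sorted t \<Longrightarrow> sorted u \<Longrightarrow> sorted w \<Longrightarrow> mset t = mset (u @ w) \<Longrightarrow>
   card (splitting_sets t u w) * map_fact u * map_fact w = map_fact t"
proof (induction t arbitrary: u w rule: rev_induct)
  case Nil
  then show ?case by (simp add: splitting_sets_def map_fact_def)
next
  case (snoc z t)
  have last_term: "(if u \<noteq> [] \<and> last u = z then card (splitting_sets t (butlast u) w) else 0)
      * map_fact u * map_fact w = map_fact t * count_list u z"
    if u: "sorted u" and w: "sorted w" and m: "mset (t @ [z]) = mset (u @ w)" for u w
  proof (cases "z \<in> set u")
    case True
    have "set (u @ w) = set (t @ [z])" using m by (metis set_mset_mset)
    then have "\<forall>x\<in>set u. x \<le> z" using sorted_le_last[OF snoc.prems(1)] by auto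
    then have last: "u \<noteq> [] \<and> last u = z" using sorted_last_eq_iff_mem[OF u] True by blast
    then have u_eq: "u = butlast u @ [z]" by (metis append_butlast_last_id)
    have "mset u = add_mset z (mset (butlast u))" using arg_cong[OF u_eq, of mset] by simp
    then have "mset t = mset (butlast u @ w)" using m by simp
    then have "card (splitting_sets t (butlast u) w) * map_fact (butlast u) * map_fact w = map_fact t"
      using snoc.IH snoc.prems(1) u w by (simp add: sorted_append sorted_butlast)
    moreover have "map_fact u = map_fact (butlast u) * count_list u z"
      by (subst (1 2) u_eq) (rule map_fact_snoc)
    ultimately show ?thesis using last by (simp add: algebra_simps)
  qed (auto simp: count_list_0_iff)
  have "card (splitting_sets (t @ [z]) u w) * map_fact u * map_fact w
      = map_fact t * count_list u z + map_fact t * count_list w z"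
    using last_term[of u w] last_term[of w u] snoc.prems
    unfolding card_splitting_sets_snoc card_splitting_sets_swap[of t u "butlast w"]
    by (simp add: algebra_simps split del: if_split)
  also have "\<dots> = map_fact (t @ [z])"
    using snoc.prems(4) by (simp add: map_fact_snoc algebra_simps flip: count_mset)
  finally show ?case .
qed

definition shuffle_of_set :: "nat \<Rightarrow> nat set \<Rightarrow> nat list" where
  "shuffle_of_set n A = map Suc (filter (\<lambda>i. i \<in> A) [0..<n] @ filter (\<lambda>i. i \<notin> A) [0..<n])"

lemma comp_map_shuffle_of_set: "comp_map t (shuffle_of_set (length t) A) = nths t A @ nths t (- A)"
  unfolding comp_map_def shuffle_of_set_def nths_eq_map_nth_filter by simp

lemma set_map_Suc_filter_upt: "set (map Suc (filter (\<lambda>i. P (Suc i)) [0..<n])) = {x \<in> {1..n}. P x}"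
proof -
  have "x \<in> Suc ` {i. i < n \<and> P (Suc i)}" if "x \<in> {1..n}" "P x" for x
    using that by (intro image_eqI[of _ _ "x - 1"]) auto
  then show ?thesis by auto
qed

lemma sorted_wrt_less_map_Suc_filter_upt: "sorted_wrt (<) (map Suc (filter P [0..<n]))"
  by (simp add: sorted_wrt_map sorted_wrt_filter)

lemma shuffle_of_set_in_sh:
  assumes "length (filter (\<lambda>i. i \<in> A) [0..<k + l]) = k"
  shows "shuffle_of_set (k + l) A \<in> sh k l"
proof -
  let ?xs = "filter (\<lambda>i. i \<in> A) [0..<k + l]" and ?ys = "filter (\<lambda>i. i \<notin> A) [0..<k + l]"
  have len: "length ?xs + length ?ys = k + l"
    using sum_length_filter_compl[of "\<lambda>i. i \<in> A" "[0..<k + l]"] by simp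
  have "set ?xs \<union> set ?ys = {0..<k + l}" by auto
  then have "set (shuffle_of_set (k + l) A) = Suc ` {0..<k + l}"
    unfolding shuffle_of_set_def set_map set_append image_Un[symmetric] by simp
  then have set: "set (shuffle_of_set (k + l) A) = {1..k + l}"
    by (simp add: image_Suc_atLeastLessThan atLeastLessThanSuc_atLeastAtMost)
  have "take k (shuffle_of_set (k + l) A) = map Suc ?xs"
    "drop k (shuffle_of_set (k + l) A) = map Suc ?ys"
    using assms by (simp_all add: shuffle_of_set_def)
  then show ?thesis using len set assms sorted_wrt_less_map_Suc_filter_upt
    by (auto simp: sh_def qsh_def surj_onto_interval_def shuffle_of_set_def distinct_map)
qed

lemma set_take_shuffle_of_set:
  assumes "A \<subseteq> {..<n}" "length (filter (\<lambda>i. i \<in> A) [0..<n]) = k"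
  shows "{i. Suc i \<in> set (take k (shuffle_of_set n A))} = A"
  using assms by (auto simp: shuffle_of_set_def)

lemma shuffle_of_set_take_eq:
  assumes "\<sigma> \<in> sh k l"
  shows "length (filter (\<lambda>i. Suc i \<in> set (take k \<sigma>)) [0..<k + l]) = k"
    "shuffle_of_set (k + l) {i. Suc i \<in> set (take k \<sigma>)} = \<sigma>"
proof -
  note f = shD[OF assms]
  let ?S = "set (take k \<sigma>)"
  have "?S \<union> set (drop k \<sigma>) = {1..k + l}"
    using f(2) by (metis append_take_drop_id set_append)
  moreover have "?S \<inter> set (drop k \<sigma>) = {}"
    using set_take_disj_set_drop_if_distinct[OF f(3), of k k] by simp
  ultimately have "set (map Suc (filter (\<lambda>i. Suc i \<in> ?S) [0..<k + l])) = ?S"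
    "set (map Suc (filter (\<lambda>i. Suc i \<notin> ?S) [0..<k + l])) = set (drop k \<sigma>)"
    unfolding set_map_Suc_filter_upt[of "\<lambda>x. x \<in> ?S"] set_map_Suc_filter_upt[of "\<lambda>x. x \<notin> ?S"]
    by auto
  then have "take k \<sigma> = map Suc (filter (\<lambda>i. Suc i \<in> ?S) [0..<k + l])"
    "drop k \<sigma> = map Suc (filter (\<lambda>i. Suc i \<notin> ?S) [0..<k + l])"
    using f(4,5) sorted_wrt_less_map_Suc_filter_upt strict_sorted_equal by blast+
  then show "length (filter (\<lambda>i. Suc i \<in> ?S) [0..<k + l]) = k"
    "shuffle_of_set (k + l) {i. Suc i \<in> ?S} = \<sigma>"
    using f(1) unfolding shuffle_of_set_def mem_Collect_eq map_append
    by (metis length_map length_take min_absorb2 le_add1, metis append_take_drop_id)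
qed

lemma card_sh_comp_map_eq_card_splitting_sets:
  assumes "length t = k + l" "length u = k"
  shows "card {\<sigma> \<in> sh k l. comp_map t \<sigma> = u @ w} = card (splitting_sets t u w)"
proof -
  let ?set_of = "\<lambda>\<sigma>. {i. Suc i \<in> set (take k \<sigma>)}"
  have length_A: "length (filter (\<lambda>i. i \<in> A) [0..<k + l]) = k" if "A \<in> splitting_sets t u w" for A
    using that assms
    by (metis (mono_tags) splitting_sets_def mem_Collect_eq nths_eq_map_nth_filter length_map)
  have "?set_of \<sigma> \<in> splitting_sets t u w" if "\<sigma> \<in> sh k l" "comp_map t \<sigma> = u @ w" for \<sigma>
  proof -
    note inv = shuffle_of_set_take_eq[OF that(1)]
    have "nths t (?set_of \<sigma>) @ nths t (- ?set_of \<sigma>) = u @ w"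
      using that(2) comp_map_shuffle_of_set[of t "?set_of \<sigma>"] inv(2) assms(1) by simp
    moreover have "length (nths t (?set_of \<sigma>)) = length u"
      using inv(1) assms by (simp add: nths_eq_map_nth_filter)
    moreover have "?set_of \<sigma> \<subseteq> {..<length t}"
      using shD(2)[OF that(1)] assms(1) by (auto dest: in_set_takeD)
    ultimately show ?thesis by (simp add: splitting_sets_def)
  qed
  moreover have "shuffle_of_set (k + l) A \<in> sh k l" "comp_map t (shuffle_of_set (k + l) A) = u @ w"
    if "A \<in> splitting_sets t u w" for A
    using shuffle_of_set_in_sh[OF length_A[OF that]] comp_map_shuffle_of_set[of t A] that assms(1)
    by (simp_all add: splitting_sets_def)
  moreover have "?set_of (shuffle_of_set (k + l) A) = A" if "A \<in> splitting_sets t u w" for A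
    using set_take_shuffle_of_set[OF _ length_A[OF that]] that assms(1)
    by (simp add: splitting_sets_def)
  ultimately have "bij_betw (shuffle_of_set (k + l)) (splitting_sets t u w)
      {\<sigma> \<in> sh k l. comp_map t \<sigma> = u @ w}"
    using shuffle_of_set_take_eq(2) by (intro bij_betw_byWitness[where f'="?set_of"]) auto
  then show ?thesis by (simp add: bij_betw_same_card)
qed

section \<open>Relabelling by a strictly increasing list\<close>

lemma bij_betw_nth_pred:
  fixes \<rho> :: "'a :: linorder list"
  assumes "sorted_wrt (<) \<rho>"
  shows "bij_betw (\<lambda>i. \<rho> ! (i - 1)) {1..length \<rho>} (set \<rho>)"
proof (rule bij_betwI')
  fix i j assume "i \<in> {1..length \<rho>}" "j \<in> {1..length \<rho>}"
  then show "\<rho> ! (i - 1) = \<rho> ! (j - 1) \<longleftrightarrow> i = j"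
    using nth_eq_iff_index_eq[OF strict_sorted_iff[THEN iffD1, OF assms, THEN conjunct2],
        of "i - 1" "j - 1"]
    by fastforce
next
  fix y assume "y \<in> set \<rho>"
  then obtain j where "j < length \<rho>" "y = \<rho> ! j" by (auto simp: in_set_conv_nth)
  then show "\<exists>i\<in>{1..length \<rho>}. y = \<rho> ! (i - 1)" by (intro bexI[of _ "Suc j"]) auto
qed auto

lemma comp_map_mono:
  assumes "sorted \<rho>" "\<forall>x\<in>set \<sigma>. x \<in> {1..length \<rho>}" "sorted \<sigma>"
  shows "sorted (comp_map \<rho> \<sigma>)"
proof -
  have "sorted_wrt (\<lambda>x y. \<rho> ! (x - 1) \<le> \<rho> ! (y - 1)) \<sigma>"
  proof (rule sorted_wrt_mono_rel[of _ "(\<le>)"])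
    fix x y assume "x \<in> set \<sigma>" "y \<in> set \<sigma>" "x \<le> y"
    with assms(1,2) show "\<rho> ! (x - 1) \<le> \<rho> ! (y - 1)" by (intro sorted_nth_mono) auto
  qed (use assms(3) in simp)
  then show ?thesis by (simp add: comp_map_def sorted_wrt_map)
qed

lemma comp_map_strict_sorted:
  assumes \<rho>: "sorted_wrt (<) \<rho>" and \<sigma>: "sorted \<sigma>" "set \<sigma> = {1..length \<rho>}"
  shows "sorted (comp_map \<rho> \<sigma>)" "set (comp_map \<rho> \<sigma>) = set \<rho>"
    "map_fact (comp_map \<rho> \<sigma>) = map_fact \<sigma>"
proof -
  have bij: "bij_betw (\<lambda>i. \<rho> ! (i - 1)) (set \<sigma>) (set \<rho>)"
    using bij_betw_nth_pred[OF \<rho>] \<sigma>(2) by simp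
  show "sorted (comp_map \<rho> \<sigma>)"
    using comp_map_mono[of \<rho> \<sigma>] \<rho> \<sigma> by (simp add: strict_sorted_iff)
  show "set (comp_map \<rho> \<sigma>) = set \<rho>"
    using bij by (simp add: comp_map_def bij_betw_def)
  show "map_fact (comp_map \<rho> \<sigma>) = map_fact \<sigma>"
    using bij unfolding comp_map_def by (intro map_fact_map_inj_on) (simp add: bij_betw_def)
qed

lemma comp_map_strict_sorted_inj:
  assumes "sorted_wrt (<) \<rho>" "sorted_wrt (<) \<rho>'"
    and "sorted \<sigma>" "sorted \<sigma>'" "set \<sigma> = {1..length \<rho>}" "set \<sigma>' = {1..length \<rho>'}"
    and eq: "comp_map \<rho> \<sigma> = comp_map \<rho>' \<sigma>'"
  shows "\<rho> = \<rho>' \<and> \<sigma> = \<sigma>'"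
proof
  show "\<rho> = \<rho>'"
    using comp_map_strict_sorted(2)[of \<rho> \<sigma>] comp_map_strict_sorted(2)[of \<rho>' \<sigma>'] assms
    by (metis strict_sorted_equal)
  then have "inj_on (\<lambda>i. \<rho> ! (i - 1)) (set \<sigma> \<union> set \<sigma>')"
    using bij_betw_nth_pred[OF assms(1)] assms(5,6) by (simp add: bij_betw_def)
  then show "\<sigma> = \<sigma>'"
    using eq \<open>\<rho> = \<rho>'\<close> unfolding comp_map_def by (blast intro: map_inj_on)
qed

lemma sorted_eq_comp_map_strict_sorted:
  assumes v: "sorted v"
  obtains \<rho> \<sigma> where "sorted_wrt (<) \<rho>" "set \<rho> = set v" "sorted \<sigma>" "set \<sigma> = {1..length \<rho>}"
    "comp_map \<rho> \<sigma> = v"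
proof -
  define \<rho> where "\<rho> = sorted_list_of_set (set v)"
  have \<rho>: "sorted_wrt (<) \<rho>" "set \<rho> = set v" by (simp_all add: \<rho>_def)
  define h where "h = (\<lambda>i. \<rho> ! (i - 1))"
  have h: "bij_betw h {1..length \<rho>} (set v)"
    unfolding h_def using bij_betw_nth_pred[OF \<rho>(1)] \<rho>(2) by simp
  define g where "g = the_inv_into {1..length \<rho>} h"
  have g: "bij_betw g (set v) {1..length \<rho>}" unfolding g_def by (rule bij_betw_the_inv_into[OF h])
  have hg: "h (g y) = y" if "y \<in> set v" for y
    unfolding g_def using that h by (simp add: bij_betw_def f_the_inv_into_f)
  have h_less: "h i < h j" if "i \<in> {1..length \<rho>}" "j \<in> {1..length \<rho>}" "i < j" for i j
    using sorted_wrt_nth_less[OF \<rho>(1), of "i - 1" "j - 1"] that by (auto simp: h_def)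
  have "g x \<le> g y" if "x \<in> set v" "y \<in> set v" "x \<le> y" for x y
    using h_less[of "g y" "g x"] hg that g by (force simp: bij_betw_def)
  then have "sorted (map g v)"
    by (simp add: sorted_wrt_map sorted_wrt_mono_rel[OF _ v])
  moreover have "set (map g v) = {1..length \<rho>}" using g by (simp add: bij_betw_def)
  moreover have "comp_map \<rho> (map g v) = v"
    using hg unfolding comp_map_def h_def[symmetric] by (simp add: map_idI)
  ultimately show ?thesis using \<rho> that by blast
qed

section \<open>The left-hand side\<close>

lemma comp_map_tensor:
  assumes "set \<sigma>1 = {1..a}" "set \<sigma>2 = {1..b}" "length \<tau> = a + b"
  shows "comp_map \<tau> (tensor \<sigma>1 \<sigma>2) = comp_map (take a \<tau>) \<sigma>1 @ comp_map (drop a \<tau>) \<sigma>2"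
  using assms mx_eq[OF assms(1)] by (auto simp: comp_map_def tensor_def nth_drop intro!: map_cong)

definition split_sorted :: "nat \<Rightarrow> nat \<Rightarrow> nat list set" where
  "split_sorted k l =
     {f. length f = k + l \<and> surj_onto_interval f \<and> sorted (take k f) \<and> sorted (drop k f)}"

definition split_weight :: "nat \<Rightarrow> nat list \<Rightarrow> rat" where
  "split_weight k f = 1 / (of_nat (map_fact (take k f)) * of_nat (map_fact (drop k f)))"

lemma finite_split_sorted: "finite (split_sorted k l)"
  by (rule finite_subset[OF _ finite_surj_onto_interval[of "k + l"]]) (auto simp: split_sorted_def)

lemma take_drop_comp_map_tensor:
  assumes "\<sigma>1 \<in> inc k" "\<sigma>2 \<in> inc l" "\<tau> \<in> qsh (mx \<sigma>1) (mx \<sigma>2)"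
  shows "take k (comp_map \<tau> (tensor \<sigma>1 \<sigma>2)) = comp_map (take (mx \<sigma>1) \<tau>) \<sigma>1"
    "drop k (comp_map \<tau> (tensor \<sigma>1 \<sigma>2)) = comp_map (drop (mx \<sigma>1) \<tau>) \<sigma>2"
  using comp_map_tensor[OF incD(3)[OF assms(1)] incD(3)[OF assms(2)] qshD(1)[OF assms(3)]]
    incD(1)[OF assms(1)] by (simp_all add: comp_map_def)

lemma comp_map_tensor_in_split_sorted:
  assumes "\<sigma>1 \<in> inc k" "\<sigma>2 \<in> inc l" "\<tau> \<in> qsh (mx \<sigma>1) (mx \<sigma>2)"
  shows "comp_map \<tau> (tensor \<sigma>1 \<sigma>2) \<in> split_sorted k l"
    "split_weight k (comp_map \<tau> (tensor \<sigma>1 \<sigma>2)) = 1 / (of_nat (map_fact \<sigma>1) * of_nat (map_fact \<sigma>2))"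
proof -
  note \<sigma>1 = incD[OF assms(1)] and \<sigma>2 = incD[OF assms(2)] and \<tau> = qshD[OF assms(3)]
  let ?f = "comp_map \<tau> (tensor \<sigma>1 \<sigma>2)"
  have "length (take (mx \<sigma>1) \<tau>) = mx \<sigma>1" "length (drop (mx \<sigma>1) \<tau>) = mx \<sigma>2"
    using \<tau>(1) by simp_all
  note take = comp_map_strict_sorted[OF \<tau>(3) \<sigma>1(2), unfolded this, OF \<sigma>1(3)]
    and drop = comp_map_strict_sorted[OF \<tau>(4) \<sigma>2(2), unfolded this, OF \<sigma>2(3)]
  note split = take_drop_comp_map_tensor[OF assms]
  have "set ?f = set \<tau>"
    using take(2) drop(2) by (metis append_take_drop_id set_append split)
  then have "surj_onto_interval ?f" using \<tau>(2) by (simp add: surj_onto_interval_def)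
  moreover have "length ?f = k + l"
    using \<sigma>1(1) \<sigma>2(1) by (simp add: comp_map_def tensor_def)
  ultimately show "?f \<in> split_sorted k l"
    unfolding split_sorted_def using split take(1) drop(1) by simp
  show "split_weight k ?f = 1 / (of_nat (map_fact \<sigma>1) * of_nat (map_fact \<sigma>2))"
    unfolding split_weight_def split take(3) drop(3) ..
qed

lemma comp_map_tensor_inj:
  assumes a: "\<sigma>1 \<in> inc k" "\<sigma>2 \<in> inc l" "\<tau> \<in> qsh (mx \<sigma>1) (mx \<sigma>2)"
    and a': "\<sigma>1' \<in> inc k" "\<sigma>2' \<in> inc l" "\<tau>' \<in> qsh (mx \<sigma>1') (mx \<sigma>2')"
    and eq: "comp_map \<tau> (tensor \<sigma>1 \<sigma>2) = comp_map \<tau>' (tensor \<sigma>1' \<sigma>2')"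
  shows "\<sigma>1 = \<sigma>1' \<and> \<sigma>2 = \<sigma>2' \<and> \<tau> = \<tau>'"
proof -
  note f = incD[OF a(1)] incD[OF a(2)] qshD[OF a(3)]
    and f' = incD[OF a'(1)] incD[OF a'(2)] qshD[OF a'(3)]
  have "take (mx \<sigma>1) \<tau> = take (mx \<sigma>1') \<tau>' \<and> \<sigma>1 = \<sigma>1'"
    using take_drop_comp_map_tensor(1)[OF a] take_drop_comp_map_tensor(1)[OF a'] eq f f'
    by (intro comp_map_strict_sorted_inj) auto
  moreover have "drop (mx \<sigma>1) \<tau> = drop (mx \<sigma>1') \<tau>' \<and> \<sigma>2 = \<sigma>2'"
    using take_drop_comp_map_tensor(2)[OF a] take_drop_comp_map_tensor(2)[OF a'] eq f f'
    by (intro comp_map_strict_sorted_inj) auto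
  ultimately show ?thesis by (metis append_take_drop_id)
qed

lemma split_sorted_obtain_comp_map_tensor:
  assumes "f \<in> split_sorted k l"
  obtains \<sigma>1 \<sigma>2 \<tau> where "\<sigma>1 \<in> inc k" "\<sigma>2 \<in> inc l" "\<tau> \<in> qsh (mx \<sigma>1) (mx \<sigma>2)"
    "comp_map \<tau> (tensor \<sigma>1 \<sigma>2) = f"
proof -
  have f: "length f = k + l" "surj_onto_interval f" "sorted (take k f)" "sorted (drop k f)"
    using assms by (simp_all add: split_sorted_def)
  obtain \<rho>1 \<sigma>1 where 1: "sorted_wrt (<) \<rho>1" "set \<rho>1 = set (take k f)" "sorted \<sigma>1"
    "set \<sigma>1 = {1..length \<rho>1}" "comp_map \<rho>1 \<sigma>1 = take k f"
    by (rule sorted_eq_comp_map_strict_sorted[OF f(3)])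
  obtain \<rho>2 \<sigma>2 where 2: "sorted_wrt (<) \<rho>2" "set \<rho>2 = set (drop k f)" "sorted \<sigma>2"
    "set \<sigma>2 = {1..length \<rho>2}" "comp_map \<rho>2 \<sigma>2 = drop k f"
    by (rule sorted_eq_comp_map_strict_sorted[OF f(4)])
  have mx: "mx \<sigma>1 = length \<rho>1" "mx \<sigma>2 = length \<rho>2" using 1(4) 2(4) by (simp_all add: mx_eq)
  have "length \<sigma>1 = k" "length \<sigma>2 = l"
    using arg_cong[OF 1(5), of length] arg_cong[OF 2(5), of length] f(1)
    by (simp_all add: comp_map_def)
  then have "\<sigma>1 \<in> inc k" "\<sigma>2 \<in> inc l"
    using 1 2 by (auto simp: inc_def surj_onto_interval_def)
  moreover have "set (\<rho>1 @ \<rho>2) = set f" using 1(2) 2(2) by (metis append_take_drop_id set_append)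
  then have "\<rho>1 @ \<rho>2 \<in> qsh (mx \<sigma>1) (mx \<sigma>2)"
    using 1(1) 2(1) f(2) mx by (simp add: qsh_def surj_onto_interval_def)
  moreover have "comp_map (\<rho>1 @ \<rho>2) (tensor \<sigma>1 \<sigma>2) = f"
    using comp_map_tensor[OF 1(4) 2(4)] 1(5) 2(5) by simp
  ultimately show ?thesis using that by blast
qed

lemma bij_betw_comp_map_tensor:
  "bij_betw (\<lambda>(\<sigma>1, \<sigma>2, \<tau>). comp_map \<tau> (tensor \<sigma>1 \<sigma>2))
     (SIGMA \<sigma>1:inc k. SIGMA \<sigma>2:inc l. qsh (mx \<sigma>1) (mx \<sigma>2)) (split_sorted k l)"
proof (rule bij_betw_imageI)
  show "inj_on (\<lambda>(\<sigma>1, \<sigma>2, \<tau>). comp_map \<tau> (tensor \<sigma>1 \<sigma>2))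
      (SIGMA \<sigma>1:inc k. SIGMA \<sigma>2:inc l. qsh (mx \<sigma>1) (mx \<sigma>2))"
    by (rule inj_onI) (clarsimp simp: comp_map_tensor_inj)
  show "(\<lambda>(\<sigma>1, \<sigma>2, \<tau>). comp_map \<tau> (tensor \<sigma>1 \<sigma>2))
      ` (SIGMA \<sigma>1:inc k. SIGMA \<sigma>2:inc l. qsh (mx \<sigma>1) (mx \<sigma>2)) = split_sorted k l"
    using comp_map_tensor_in_split_sorted(1)
    by (auto elim!: split_sorted_obtain_comp_map_tensor intro!: image_eqI[of _ _ "(_, _, _)"])
qed

lemma sum_tensor_eq_sum_split_sorted:
  "(\<Sum>\<sigma>1\<in>inc k. \<Sum>\<sigma>2\<in>inc l. \<Sum>\<tau>\<in>qsh (mx \<sigma>1) (mx \<sigma>2).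
      Poly_Mapping.single (comp_map \<tau> (tensor \<sigma>1 \<sigma>2))
        (1 / (of_nat (map_fact \<sigma>1) * of_nat (map_fact \<sigma>2)) :: rat))
   = (\<Sum>f\<in>split_sorted k l. Poly_Mapping.single f (split_weight k f))"
  (is "?L = _")
proof -
  let ?T = "SIGMA \<sigma>1:inc k. SIGMA \<sigma>2:inc l. qsh (mx \<sigma>1) (mx \<sigma>2)"
    and ?F = "\<lambda>(\<sigma>1, \<sigma>2, \<tau>). comp_map \<tau> (tensor \<sigma>1 \<sigma>2)"
  have "?L = (\<Sum>(\<sigma>1, \<sigma>2, \<tau>)\<in>?T.
      Poly_Mapping.single (comp_map \<tau> (tensor \<sigma>1 \<sigma>2))
        (1 / (of_nat (map_fact \<sigma>1) * of_nat (map_fact \<sigma>2))))"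
    by (simp add: sum.Sigma finite_inc finite_qsh)
  also have "\<dots> = (\<Sum>x\<in>?T. Poly_Mapping.single (?F x) (split_weight k (?F x)))"
    by (intro sum.cong) (auto simp: comp_map_tensor_in_split_sorted(2))
  also have "\<dots> = (\<Sum>f\<in>split_sorted k l. Poly_Mapping.single f (split_weight k f))"
    by (rule sum.reindex_bij_betw[OF bij_betw_comp_map_tensor])
  finally show ?thesis .
qed

section \<open>The right-hand side\<close>

lemma mset_comp_map_sh:
  assumes "\<sigma> \<in> sh k l" "length \<tau> = k + l"
  shows "mset (comp_map \<tau> \<sigma>) = mset \<tau>"
proof -
  have "mset \<sigma> = mset [1..<Suc (k + l)]"
    using set_eq_iff_mset_eq_distinct[of \<sigma> "[1..<Suc (k + l)]"] shD(2,3)[OF assms(1)] by auto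
  then have "mset (comp_map \<tau> \<sigma>) = mset (map (\<lambda>i. \<tau> ! (i - 1)) (map Suc [0..<k + l]))"
    unfolding comp_map_def by (simp add: map_Suc_upt)
  also have "map (\<lambda>i. \<tau> ! (i - 1)) (map Suc [0..<k + l]) = map (nth \<tau>) [0..<length \<tau>]"
    using assms(2) by simp
  finally show ?thesis by (simp only: map_nth)
qed

lemma comp_map_sh_in_split_sorted:
  assumes "\<sigma> \<in> sh k l" "\<tau> \<in> inc (k + l)"
  shows "comp_map \<tau> \<sigma> \<in> split_sorted k l"
proof -
  note \<sigma> = shD[OF assms(1)] and \<tau> = incD[OF assms(2)]
  have "set (comp_map \<tau> \<sigma>) = set \<tau>"
    using mset_comp_map_sh[OF assms(1) \<tau>(1)] by (metis set_mset_mset)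
  moreover have "sorted (comp_map \<tau> (take k \<sigma>))" "sorted (comp_map \<tau> (drop k \<sigma>))"
    using \<sigma> \<tau> by (auto intro!: comp_map_mono simp: strict_sorted_iff dest: in_set_takeD in_set_dropD)
  ultimately show ?thesis using \<sigma>(1) \<tau>(3)
    by (auto simp: split_sorted_def surj_onto_interval_def comp_map_def take_map drop_map)
qed

lemma comp_map_sh_inc_eq_iff:
  assumes "\<sigma> \<in> sh k l" "\<tau> \<in> inc (k + l)" "f \<in> split_sorted k l"
  shows "comp_map \<tau> \<sigma> = f \<longleftrightarrow> \<tau> = sort f \<and> comp_map (sort f) \<sigma> = f"
  using properties_for_sort[of \<tau> f] mset_comp_map_sh[OF assms(1) incD(1)[OF assms(2)]]
    incD(2)[OF assms(2)] by auto

lemma sort_in_inc: "f \<in> split_sorted k l \<Longrightarrow> sort f \<in> inc (k + l)"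
  by (auto simp: split_sorted_def inc_def surj_onto_interval_def)

lemma sum_fibre_sh_inc_eq_split_weight:
  assumes "f \<in> split_sorted k l"
  shows "(\<Sum>p\<in>{p \<in> sh k l \<times> inc (k + l). comp_map (snd p) (fst p) = f}.
      1 / of_nat (map_fact (snd p))) = split_weight k f"
proof -
  let ?t = "sort f" and ?u = "take k f" and ?w = "drop k f"
  let ?A = "{\<sigma> \<in> sh k l. comp_map ?t \<sigma> = f}"
  have f: "length f = k + l" "sorted ?u" "sorted ?w" using assms by (simp_all add: split_sorted_def)
  have fibre: "{p \<in> sh k l \<times> inc (k + l). comp_map (snd p) (fst p) = f} = ?A \<times> {?t}"
  proof (intro set_eqI iffI)
    fix p assume "p \<in> {p \<in> sh k l \<times> inc (k + l). comp_map (snd p) (fst p) = f}"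
    then show "p \<in> ?A \<times> {?t}"
      using comp_map_sh_inc_eq_iff[OF _ _ assms, of "fst p" "snd p"] by (cases p) simp
  next
    fix p assume "p \<in> ?A \<times> {?t}"
    then show "p \<in> {p \<in> sh k l \<times> inc (k + l). comp_map (snd p) (fst p) = f}"
      using sort_in_inc[OF assms] by auto
  qed
  have "(\<Sum>p\<in>{p \<in> sh k l \<times> inc (k + l). comp_map (snd p) (fst p) = f}.
        1 / of_nat (map_fact (snd p))) = (\<Sum>p\<in>?A \<times> {?t}. 1 / of_nat (map_fact ?t) :: rat)"
    unfolding fibre by (rule sum.cong[OF refl]) auto
  also have "\<dots> = of_nat (card (splitting_sets ?t ?u ?w)) / of_nat (map_fact ?t)"
    using card_sh_comp_map_eq_card_splitting_sets[of ?t k l ?u ?w] f(1)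
    by (simp add: card_cartesian_product)
  also have "\<dots> = split_weight k f"
  proof -
    have "card (splitting_sets ?t ?u ?w) * map_fact ?u * map_fact ?w = map_fact ?t"
      using f by (intro card_splitting_sets_mult_map_fact) auto
    then show ?thesis
      unfolding split_weight_def using map_fact_pos[of ?t] map_fact_pos[of ?u] map_fact_pos[of ?w]
      by (simp add: field_simps flip: of_nat_mult)
  qed
  finally show ?thesis .
qed

lemma single_sum: "Poly_Mapping.single x (\<Sum>a\<in>A. g a) = (\<Sum>a\<in>A. Poly_Mapping.single x (g a))"
  by (induction A rule: infinite_finite_induct) (simp_all add: single_add)

lemma sum_sh_inc_eq_sum_split_sorted:
  "(\<Sum>\<sigma>\<in>sh k l. \<Sum>\<tau>\<in>inc (k + l).
      Poly_Mapping.single (comp_map \<tau> \<sigma>) (1 / of_nat (map_fact \<tau>) :: rat))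
   = (\<Sum>f\<in>split_sorted k l. Poly_Mapping.single f (split_weight k f))"
proof -
  let ?S = "sh k l \<times> inc (k + l)" and ?c = "\<lambda>p. comp_map (snd p) (fst p)"
    and ?h = "\<lambda>p. 1 / of_nat (map_fact (snd p)) :: rat"
  have "(\<Sum>\<sigma>\<in>sh k l. \<Sum>\<tau>\<in>inc (k + l).
        Poly_Mapping.single (comp_map \<tau> \<sigma>) (1 / of_nat (map_fact \<tau>) :: rat))
      = (\<Sum>p\<in>?S. Poly_Mapping.single (?c p) (?h p))"
    by (simp add: sum.cartesian_product')
  also have "\<dots> = (\<Sum>f\<in>split_sorted k l. \<Sum>p\<in>{p \<in> ?S. ?c p = f}. Poly_Mapping.single f (?h p))"
    using comp_map_sh_in_split_sorted
    by (subst sum.group[symmetric, of ?S "split_sorted k l" ?c])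
      (auto simp: finite_sh finite_inc finite_split_sorted intro!: sum.cong)
  also have "\<dots> = (\<Sum>f\<in>split_sorted k l. Poly_Mapping.single f (\<Sum>p\<in>{p \<in> ?S. ?c p = f}. ?h p))"
    by (simp only: single_sum)
  also have "\<dots> = (\<Sum>f\<in>split_sorted k l. Poly_Mapping.single f (split_weight k f))"
    using sum_fibre_sh_inc_eq_split_weight by (intro sum.cong) simp_all
  finally show ?thesis .
qed

theorem mainTheorem1:
  fixes k l :: nat
  shows "(\<Sum>\<sigma>1\<in>inc k. \<Sum>\<sigma>2\<in>inc l. \<Sum>\<tau>\<in>qsh (mx \<sigma>1) (mx \<sigma>2).
            Poly_Mapping.single (comp_map \<tau> (tensor \<sigma>1 \<sigma>2))
              (1 / (of_nat (map_fact \<sigma>1) * of_nat (map_fact \<sigma>2)) :: rat))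
       = (\<Sum>\<sigma>\<in>sh k l. \<Sum>\<tau>\<in>inc (k + l).
            Poly_Mapping.single (comp_map \<tau> \<sigma>) (1 / of_nat (map_fact \<tau>) :: rat))"
  unfolding sum_tensor_eq_sum_split_sorted sum_sh_inc_eq_sum_split_sorted ..

end
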